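(* For every $i\in\mathbb{N}$, the family $\{\mathrm{bit}_i:\mathbb{Z}_{2^k}\to\{-1,1\}\}_{k>i}$ is concentrated.
   Context: $\mathbb{Z}_N=\{0,\dots,N-1\}$ with addition mod $N$. $\mathrm{bit}_i:\mathbb{Z}_{2^k}\to\{-1,1\}$ is $\mathrm{bit}_i(x)=(-1)^{x_i}$ where $x=\sum_{j=0}^{k-1}x_j2^j$, $x_j\in\{0,1\}$. For $f:\mathbb{Z}_N\to\mathbb{C}$: $\langle f,g\rangle=\frac1N\sum_x f(x)\overline{g(x)}$, $\|f\|_2^2=\langle f,f\rangle$, $\chi_\alpha(x)=\exp(2\pi i\alpha x/N)$, $\widehat f(\alpha)=\langle f,\chi_\alpha\rangle$, and $f|_\Gamma=\sum_{\alpha\in\Gamma}\widehat f(\alpha)\chi_\alpha$ for $\Gamma\subseteq\mathbb{Z}_N$. A family of functions $f_k:\mathbb{Z}_{N_k}\to\mathbb{C}$ is concentrated if there is a bivariate polynomial $P\in\mathbb{R}[x,y]$ such that for every index $k$ and every $\epsilon>0$ there is $\Gamma_k\subseteq\mathbb{Z}_{N_k}$ with $|\Gamma_k|\le P(\log(N_k),1/\epsilon)$ and $\|f_k-f_k|_{\Gamma_k}\|_2^2<\epsilon$. *)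

theory Defs
  imports Complex_Main
begin

text \<open>Functions on Z_N are represented as functions nat => complex, only
  the values on {0..<N} matter.\<close>

definition zinner :: "nat \<Rightarrow> (nat \<Rightarrow> complex) \<Rightarrow> (nat \<Rightarrow> complex) \<Rightarrow> complex" where
  "zinner N f g = (1 / of_nat N) * (\<Sum>x<N. f x * cnj (g x))"

definition znorm2sq :: "nat \<Rightarrow> (nat \<Rightarrow> complex) \<Rightarrow> real" where
  "znorm2sq N f = Re (zinner N f f)"

definition zchar :: "nat \<Rightarrow> nat \<Rightarrow> nat \<Rightarrow> complex" where
  "zchar N \<alpha> x = exp (2 * of_real pi * \<i> * of_nat \<alpha> * of_nat x / of_nat N)"

definition zfourier :: "nat \<Rightarrow> (nat \<Rightarrow> complex) \<Rightarrow> nat \<Rightarrow> complex" where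
  "zfourier N f \<alpha> = zinner N f (zchar N \<alpha>)"

definition zrestrict :: "nat \<Rightarrow> (nat \<Rightarrow> complex) \<Rightarrow> nat set \<Rightarrow> nat \<Rightarrow> complex" where
  "zrestrict N f \<Gamma> = (\<lambda>x. \<Sum>\<alpha>\<in>\<Gamma>. zfourier N f \<alpha> * zchar N \<alpha> x)"

definition bitfun :: "nat \<Rightarrow> nat \<Rightarrow> complex" where
  "bitfun i x = (if bit x i then -1 else 1)"

definition bipoly :: "nat \<Rightarrow> (nat \<Rightarrow> nat \<Rightarrow> real) \<Rightarrow> real \<Rightarrow> real \<Rightarrow> real" where
  "bipoly d c x y = (\<Sum>a<d. \<Sum>b<d. c a b * x ^ a * y ^ b)"

definition concentrated :: "nat set \<Rightarrow> (nat \<Rightarrow> nat) \<Rightarrow> (nat \<Rightarrow> nat \<Rightarrow> complex) \<Rightarrow> bool" where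
  "concentrated K N f \<longleftrightarrow>
    (\<exists>d c. \<forall>k\<in>K. \<forall>\<epsilon>::real. \<epsilon> > 0 \<longrightarrow>
       (\<exists>\<Gamma>. \<Gamma> \<subseteq> {..<N k} \<and>
          real (card \<Gamma>) \<le> bipoly d c (log 2 (real (N k))) (1 / \<epsilon>) \<and>
          znorm2sq (N k) (\<lambda>x. f k x - zrestrict (N k) (f k) \<Gamma> x) < \<epsilon>))"

end

theory Submission imports Defs "HOL-Analysis.Complex_Transcendental" begin

text \<open>If M divides N, an M-periodic function on \<open>\<int>\<^sub>N\<close> has its Fourier transform supported on
  the M multiples of \<open>N / M\<close>: splitting \<open>\<int>\<^sub>N\<close> into \<open>N / M\<close> blocks of length M factors each
  coefficient as a block sum times a sum of \<open>(N / M)\<close>-th roots of unity, which vanishes unless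
  \<open>N / M\<close> divides the frequency. By Fourier inversion the restriction to these frequencies is
  the function itself, so the bound on the number of frequencies does not even depend on \<open>\<epsilon>\<close>
  or N. The function \<open>bit\<^sub>i\<close> has period \<open>2\<^sup>i\<^sup>+\<^sup>1\<close>.\<close>

lemma sum_roots_of_unity:
  fixes L :: nat and m :: int
  assumes L: "L > 0"
  shows "(\<Sum>q<L. exp (2 * of_real pi * \<i> * of_int m * of_nat q / of_nat L)) =
         (if int L dvd m then of_nat L else 0)"
proof -
  define z where "z = exp (2 * of_real pi * \<i> * of_int m / of_nat L)"
  have pw: "exp (2 * of_real pi * \<i> * of_int m * of_nat q / of_nat L) = z ^ q" for q
    unfolding z_def by (subst exp_of_nat_mult[symmetric]) (simp add: algebra_simps)
  have z_iff: "z = 1 \<longleftrightarrow> int L dvd m"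
  proof
    assume "z = 1"
    then obtain n :: int where "2 * pi * of_int m / of_nat L = of_int (2 * n) * pi"
      unfolding z_def exp_eq_1 by auto
    hence "real_of_int m = of_int n * of_nat L" using L by (simp add: field_simps)
    hence "m = n * int L" by (metis of_int_eq_iff of_int_mult of_int_of_nat_eq)
    thus "int L dvd m" by simp
  next
    assume "int L dvd m"
    then obtain j where "m = int L * j" by blast
    thus "z = 1" unfolding z_def using L by (simp add: exp_eq_1)
  qed
  have "z ^ L = exp (2 * of_real pi * \<i> * of_int m)"
    unfolding z_def exp_of_nat_mult[symmetric] using L by simp
  hence "z ^ L = 1" by (simp add: exp_eq_1)
  thus ?thesis using z_iff by (simp add: pw sum_gp_strict)
qed

lemma cnj_zchar_mult_zchar:
  "cnj (zchar N \<alpha> y) * zchar N \<alpha> x =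
   exp (2 * of_real pi * \<i> * of_int (int x - int y) * of_nat \<alpha> / of_nat N)"
proof -
  have "cnj (zchar N \<alpha> y) * zchar N \<alpha> x =
     exp (- (2 * of_real pi * \<i> * of_nat \<alpha> * of_nat y / of_nat N) +
          2 * of_real pi * \<i> * of_nat \<alpha> * of_nat x / of_nat N)"
    unfolding zchar_def exp_cnj exp_add by simp
  also have "\<dots> = exp (2 * of_real pi * \<i> * of_int (int x - int y) * of_nat \<alpha> / of_nat N)"
    by (rule arg_cong[where f = exp]) (simp add: algebra_simps diff_divide_distrib)
  finally show ?thesis .
qed

lemma zfourier_inversion:
  assumes N: "N > 0" and x: "x < N"
  shows "(\<Sum>\<alpha><N. zfourier N f \<alpha> * zchar N \<alpha> x) = f x"
proof -
  define E where "E y \<alpha> = cnj (zchar N \<alpha> y) * zchar N \<alpha> x" for y \<alpha>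
  have orth: "(\<Sum>\<alpha><N. E y \<alpha>) = (if y = x then of_nat N else 0)" if y: "y < N" for y
  proof -
    have "int N dvd int x - int y \<longleftrightarrow> y = x"
      using x y by (metis mod_eq_dvd_iff mod_less of_nat_eq_iff zmod_int)
    thus ?thesis
      unfolding E_def cnj_zchar_mult_zchar using sum_roots_of_unity[OF N, of "int x - int y"]
      by (simp add: mult.commute mult.left_commute)
  qed
  have "(\<Sum>\<alpha><N. zfourier N f \<alpha> * zchar N \<alpha> x) =
        (\<Sum>\<alpha><N. \<Sum>y<N. 1 / of_nat N * (f y * E y \<alpha>))"
    unfolding zfourier_def zinner_def E_def sum_distrib_left sum_distrib_right
    by (simp only: mult.assoc)
  also have "\<dots> = (\<Sum>y<N. 1 / of_nat N * (f y * (\<Sum>\<alpha><N. E y \<alpha>)))"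
    by (subst sum.swap) (simp only: sum_distrib_left)
  also have "\<dots> = (\<Sum>y<N. if y = x then f x else 0)"
    using N by (intro sum.cong refl) (auto simp: orth)
  also have "\<dots> = f x" using x by simp
  finally show ?thesis .
qed

lemma zrestrict_eq_self:
  assumes "N > 0" "x < N" "\<Gamma> \<subseteq> {..<N}"
    and support: "\<And>\<alpha>. \<alpha> < N \<Longrightarrow> \<alpha> \<notin> \<Gamma> \<Longrightarrow> zfourier N f \<alpha> = 0"
  shows "zrestrict N f \<Gamma> x = f x"
proof -
  have "zrestrict N f \<Gamma> x = (\<Sum>\<alpha><N. zfourier N f \<alpha> * zchar N \<alpha> x)"
    unfolding zrestrict_def using assms(3) support by (intro sum.mono_neutral_left) auto
  also have "\<dots> = f x" using assms(1,2) by (rule zfourier_inversion)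
  finally show ?thesis .
qed

lemma sum_lessThan_mult_blocks:
  fixes g :: "nat \<Rightarrow> 'a::comm_monoid_add"
  shows "(\<Sum>y<L * M. g y) = (\<Sum>q<L. \<Sum>r<M. g (q * M + r))"
proof (induction L)
  case (Suc L)
  have "(\<Sum>y<Suc L * M. g y) = (\<Sum>y<L * M. g y) + (\<Sum>y\<in>{L * M..<L * M + M}. g y)"
    by (simp add: lessThan_atLeast0 sum.atLeastLessThan_concat add.commute)
  also have "(\<Sum>y\<in>{L * M..<L * M + M}. g y) = (\<Sum>r<M. g (L * M + r))"
    using sum.shift_bounds_nat_ivl[of g 0 "L * M" M] by (simp add: lessThan_atLeast0 add.commute)
  finally show ?case using Suc by simp
qed simp

lemma periodic_mult_add:
  fixes f :: "nat \<Rightarrow> 'a"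
  assumes "\<And>x. f (x + M) = f x"
  shows "f (q * M + r) = f r"
proof (induction q)
  case (Suc q)
  have "Suc q * M + r = (q * M + r) + M" by simp
  thus ?case using Suc assms by metis
qed simp

lemma zfourier_periodic_eq_0:
  assumes L: "L > 0" and periodic: "\<And>x. f (x + M) = f x" and not_dvd: "\<not> L dvd \<alpha>"
  shows "zfourier (L * M) f \<alpha> = 0"
proof (cases "M = 0")
  case False
  define N where "N = L * M"
  define A where "A r = f r * exp (- (2 * of_real pi * \<i> * of_nat \<alpha> * of_nat r / of_nat N))" for r
  define B where "B q = exp (2 * of_real pi * \<i> * of_int (- int \<alpha>) * of_nat q / of_nat L)" for q
  have split: "f (q * M + r) * cnj (zchar N \<alpha> (q * M + r)) = A r * B q" for q r
  proof -
    have "cnj (zchar N \<alpha> (q * M + r)) =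
        exp (- (2 * of_real pi * \<i> * of_nat \<alpha> * of_nat r / of_nat N)
          + 2 * of_real pi * \<i> * of_int (- int \<alpha>) * of_nat q / of_nat L)"
      unfolding zchar_def exp_cnj
      by (rule arg_cong[where f = exp]) (use L False in \<open>simp add: N_def field_simps\<close>)
    thus ?thesis unfolding A_def B_def exp_add periodic_mult_add[of f M, OF periodic] by (simp only: ac_simps)
  qed
  have "(\<Sum>y<N. f y * cnj (zchar N \<alpha> y)) = (\<Sum>r<M. A r) * (\<Sum>q<L. B q)"
    unfolding N_def sum_lessThan_mult_blocks split[unfolded N_def] sum_product
    by (subst sum.swap) (simp only: mult.commute)
  also have "(\<Sum>q<L. B q) = 0"
    unfolding B_def using sum_roots_of_unity[OF L, of "- int \<alpha>"] not_dvd by simp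
  finally show ?thesis unfolding zfourier_def zinner_def N_def by simp
qed (simp add: zfourier_def zinner_def)

lemma concentrated_if_periodic:
  assumes dvd: "\<And>k. k \<in> K \<Longrightarrow> M dvd N k" and pos: "\<And>k. k \<in> K \<Longrightarrow> N k > 0"
    and periodic: "\<And>k x. k \<in> K \<Longrightarrow> f k (x + M) = f k x"
  shows "concentrated K N f"
  unfolding concentrated_def
proof (intro exI[of _ "1::nat"] exI[of _ "\<lambda>_ _. real M"] ballI allI impI)
  fix k and \<epsilon> :: real
  assume k: "k \<in> K" and "\<epsilon> > 0"
  obtain L where NLM: "N k = L * M" using dvd[OF k] by (metis dvdE mult.commute)
  hence L: "L > 0" using pos[OF k] by simp
  define \<Gamma> where "\<Gamma> = (\<lambda>j. j * L) ` {..<M}"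
  have sub: "\<Gamma> \<subseteq> {..<N k}" unfolding \<Gamma>_def NLM using L by (auto simp: mult.commute)
  have "real (card \<Gamma>) \<le> real M" unfolding \<Gamma>_def using card_image_le[of "{..<M}"] by simp
  moreover have "zrestrict (N k) (f k) \<Gamma> x = f k x" if "x < N k" for x
  proof (rule zrestrict_eq_self[OF pos[OF k] that sub])
    fix \<alpha> assume "\<alpha> < N k" "\<alpha> \<notin> \<Gamma>"
    hence "\<not> L dvd \<alpha>" unfolding \<Gamma>_def NLM by (auto simp: mult.commute)
    thus "zfourier (N k) (f k) \<alpha> = 0"
      unfolding NLM using zfourier_periodic_eq_0[OF L, of "f k" M] periodic[OF k] by blast
  qed
  hence "znorm2sq (N k) (\<lambda>x. f k x - zrestrict (N k) (f k) \<Gamma> x) = 0"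
    unfolding znorm2sq_def zinner_def by simp
  ultimately show "\<exists>\<Gamma>. \<Gamma> \<subseteq> {..<N k} \<and>
      real (card \<Gamma>) \<le> bipoly 1 (\<lambda>_ _. real M) (log 2 (real (N k))) (1 / \<epsilon>) \<and>
      znorm2sq (N k) (\<lambda>x. f k x - zrestrict (N k) (f k) \<Gamma> x) < \<epsilon>"
    using sub \<open>\<epsilon> > 0\<close> by (intro exI[of _ \<Gamma>]) (simp add: bipoly_def)
qed

lemma bitfun_periodic: "bitfun i (x + 2 ^ Suc i) = bitfun i x"
proof -
  have "(x + 2 ^ Suc i) div 2 ^ i = x div 2 ^ i + 2" by simp
  thus ?thesis unfolding bitfun_def by (simp add: bit_iff_odd)
qed

theorem corollary6p4:
  fixes i :: nat
  shows "concentrated {k. k > i} (\<lambda>k. 2 ^ k) (\<lambda>k. bitfun i)"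
proof (rule concentrated_if_periodic[where M = "2 ^ Suc i"])
  show "2 ^ Suc i dvd (2::nat) ^ k" if "k \<in> {k. k > i}" for k
    using that by (metis Suc_leI le_imp_power_dvd mem_Collect_eq)
qed (simp_all add: bitfun_periodic[simplified])

end
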